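(* Let $\mathbf C$ be a finite dimensional clone $\tau$-algebra. Then the map $a\mapsto R(a)^\top$ is an isomorphism of clone $\tau$-algebras from $\mathbf C$ onto the block algebra $R_{\mathbf C}^\top=\{R(a)^\top: a\in C\}$, which is a subalgebra of the full functional clone $\tau$-algebra with value domain the $\tau$-reduct $\mathbf C_\tau=(C,\sigma^{\mathbf C})_{\sigma\in\tau}$.
   Context: Let $\omega=\{1,2,\dots\}$. A clone $\tau$-algebra is an algebra $\mathbf C=(C,\sigma^{\mathbf C}\ (\sigma\in\tau),q_n^{\mathbf C}\ (n\ge0),\mathsf e_i^{\mathbf C}\ (i\ge1))$ with $\mathsf e_i$ nullary, $q_n$ of arity $n+1$, satisfying: (C1) $q_n(\mathsf e_i,x_1,\dots,x_n)=x_i$ ($1\le i\le n$); (C2) $q_n(\mathsf e_j,x_1,\dots,x_n)=\mathsf e_j$ ($j>n$); (C3) $q_n(x,\mathsf e_1,\dots,\mathsf e_n)=x$; (C4) $q_k(x,y_1,\dots,y_k)=q_n(x,y_1,\dots,y_k,\mathsf e_{k+1},\dots,\mathsf e_n)$ ($n>k$); (C5) $q_n(q_n(x,\mathbf y),\mathbf z)=q_n(x,q_n(y_1,\mathbf z),\dots,q_n(y_n,\mathbf z))$ with $\mathbf y,\mathbf z$ of length $n$; (C6) $q_n(\sigma(x_1,\dots,x_k),\mathbf y)=\sigma(q_n(x_1,\mathbf y),\dots,q_n(x_k,\mathbf y))$ for $\sigma\in\tau$ of arity $k$. An element $a$ is independent of $\mathsf e_n$ if $q_n(a,\mathsf e_1,\dots,\mathsf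 e_{n-1},\mathsf e_{n+1})=a$; its dimension $\gamma(a)$ is $\omega$ if it depends on infinitely many $\mathsf e_i$, $0$ if on none, and otherwise the largest $i$ with $a$ dependent on $\mathsf e_i$. $\mathbf C$ is finite dimensional if every element has finite dimension. A function $f:C^k\to C$ is $\mathbf C$-representable if $f(\mathsf e_1,\dots,\mathsf e_k)$ has dimension $\le k$ and $f(a_1,\dots,a_k)=q_k(f(\mathsf e_1,\dots,\mathsf e_k),a_1,\dots,a_k)$ for all $a_1,\dots,a_k\in C$. For $a$ of finite dimension, $R(a)$ is the set of all $\mathbf C$-representable functions $f$ (of any arity $n$) with $f(\mathsf e_1,\dots,\mathsf e_n)=a$. For a finitary $f:C^n\to C$ the top extension is $f^\top:C^\omega\to C$, $f^\top(s)=f(s_1,\dots,s_n)$; all members of $R(a)$ have the same top extension, denoted $R(a)^\top$. For a $\tau$-algebra $\mathbf A$, the full functional clone $\tau$-algebra with value domain $\mathbf A$ has universe all functions $A^\omega\to A$ and operations $\mathsf e_i(s)=s_i$, $q_n(\varphi,\psi_1,\dots,\psi_n)(s)=\varphi(s[\psi_1(s),\dots,\psi_n(s)])$, $\sigma(\psi_1,\dots,\psi_n)(s)=\sigma^{\mathbf A}(\psi_1(s),\dots,\psi_n(s))$, where $s[b_1,\dots,b_n]$ replaces the first $n$ entries of $s$ by $b_1,\dots,b_n$. *)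

theory Defs
  imports Main
begin

text \<open>The signature tau is given by a type 's of
operation symbols together with an arity function ar.  The operation sigma is
sg sigma, applied to a list of ar sigma arguments; q n x ys is q_n(x,y_1,...,y_n) with
length ys = n; e i is the nullary e_i (i >= 1; e 0 is unused).\<close>

definition clone_alg ::
  "('s \<Rightarrow> nat) \<Rightarrow> 'c set \<Rightarrow> ('s \<Rightarrow> 'c list \<Rightarrow> 'c) \<Rightarrow> (nat \<Rightarrow> 'c \<Rightarrow> 'c list \<Rightarrow> 'c) \<Rightarrow> (nat \<Rightarrow> 'c) \<Rightarrow> bool"
where
  "clone_alg ar C sg q e \<longleftrightarrow>
     (\<forall>i\<ge>1. e i \<in> C)
   \<and> (\<forall>n x ys. x \<in> C \<longrightarrow> length ys = n \<longrightarrow> set ys \<subseteq> C \<longrightarrow> q n x ys \<in> C)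
   \<and> (\<forall>s xs. length xs = ar s \<longrightarrow> set xs \<subseteq> C \<longrightarrow> sg s xs \<in> C)
   \<comment> \<open>(C1)\<close>
   \<and> (\<forall>n i xs. 1 \<le> i \<longrightarrow> i \<le> n \<longrightarrow> length xs = n \<longrightarrow> set xs \<subseteq> C \<longrightarrow> q n (e i) xs = xs ! (i - 1))
   \<comment> \<open>(C2)\<close>
   \<and> (\<forall>n j xs. j > n \<longrightarrow> length xs = n \<longrightarrow> set xs \<subseteq> C \<longrightarrow> q n (e j) xs = e j)
   \<comment> \<open>(C3)\<close>
   \<and> (\<forall>n x. x \<in> C \<longrightarrow> q n x (map e [1..<n+1]) = x)
   \<comment> \<open>(C4)\<close>
   \<and> (\<forall>n k x ys. n > k \<longrightarrow> x \<in> C \<longrightarrow> length ys = k \<longrightarrow> set ys \<subseteq> C \<longrightarrow>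
        q k x ys = q n x (ys @ map e [k+1..<n+1]))
   \<comment> \<open>(C5)\<close>
   \<and> (\<forall>n x ys zs. x \<in> C \<longrightarrow> length ys = n \<longrightarrow> set ys \<subseteq> C \<longrightarrow> length zs = n \<longrightarrow> set zs \<subseteq> C \<longrightarrow>
        q n (q n x ys) zs = q n x (map (\<lambda>y. q n y zs) ys))
   \<comment> \<open>(C6)\<close>
   \<and> (\<forall>s xs n ys. length xs = ar s \<longrightarrow> set xs \<subseteq> C \<longrightarrow> length ys = n \<longrightarrow> set ys \<subseteq> C \<longrightarrow>
        q n (sg s xs) ys = sg s (map (\<lambda>x. q n x ys) xs))"

text \<open>a is independent of e_n (n >= 1).\<close>
definition indep :: "(nat \<Rightarrow> 'c \<Rightarrow> 'c list \<Rightarrow> 'c) \<Rightarrow> (nat \<Rightarrow> 'c) \<Rightarrow> 'c \<Rightarrow> nat \<Rightarrow> bool" where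
  "indep q e a n \<longleftrightarrow> q n a (map e [1..<n] @ [e (n+1)]) = a"

definition deps :: "(nat \<Rightarrow> 'c \<Rightarrow> 'c list \<Rightarrow> 'c) \<Rightarrow> (nat \<Rightarrow> 'c) \<Rightarrow> 'c \<Rightarrow> nat set" where
  "deps q e a = {n. 1 \<le> n \<and> \<not> indep q e a n}"

definition finite_dim :: "(nat \<Rightarrow> 'c \<Rightarrow> 'c list \<Rightarrow> 'c) \<Rightarrow> (nat \<Rightarrow> 'c) \<Rightarrow> 'c \<Rightarrow> bool" where
  "finite_dim q e a \<longleftrightarrow> finite (deps q e a)"

definition dim :: "(nat \<Rightarrow> 'c \<Rightarrow> 'c list \<Rightarrow> 'c) \<Rightarrow> (nat \<Rightarrow> 'c) \<Rightarrow> 'c \<Rightarrow> nat" where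
  "dim q e a = Max (insert 0 (deps q e a))"

text \<open>A k-ary function on C is represented by f :: 'c list => 'c (only values on lists of
length k with entries in C matter).\<close>
definition representable ::
  "'c set \<Rightarrow> (nat \<Rightarrow> 'c \<Rightarrow> 'c list \<Rightarrow> 'c) \<Rightarrow> (nat \<Rightarrow> 'c) \<Rightarrow> nat \<Rightarrow> ('c list \<Rightarrow> 'c) \<Rightarrow> bool" where
  "representable C q e k f \<longleftrightarrow>
     f (map e [1..<k+1]) \<in> C \<and>
     finite_dim q e (f (map e [1..<k+1])) \<and> dim q e (f (map e [1..<k+1])) \<le> k \<and>
     (\<forall>as. length as = k \<longrightarrow> set as \<subseteq> C \<longrightarrow> f as = q k (f (map e [1..<k+1])) as)"

definition Rset :: "'c set \<Rightarrow> (nat \<Rightarrow> 'c \<Rightarrow> 'c list \<Rightarrow> 'c) \<Rightarrow> (nat \<Rightarrow> 'c) \<Rightarrow> 'c \<Rightarrow> (nat \<times> ('c list \<Rightarrow> 'c)) set" where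
  "Rset C q e a = {(n, f). representable C q e n f \<and> f (map e [1..<n+1]) = a}"

text \<open>omega-sequences over C: s_i for i >= 1; coordinate 0 is unused (fixed to undefined).\<close>
definition seqs :: "'c set \<Rightarrow> (nat \<Rightarrow> 'c) set" where
  "seqs C = {s. (\<forall>i\<ge>1. s i \<in> C) \<and> s 0 = undefined}"

text \<open>Universe of the full functional clone algebra: all functions C^omega -> C (extensional).\<close>
definition FF :: "'c set \<Rightarrow> ((nat \<Rightarrow> 'c) \<Rightarrow> 'c) set" where
  "FF C = {\<phi>. (\<forall>s\<in>seqs C. \<phi> s \<in> C) \<and> (\<forall>s. s \<notin> seqs C \<longrightarrow> \<phi> s = undefined)}"

definition seq_upd :: "(nat \<Rightarrow> 'c) \<Rightarrow> 'c list \<Rightarrow> (nat \<Rightarrow> 'c)" where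
  "seq_upd s bs = (\<lambda>i. if 1 \<le> i \<and> i \<le> length bs then bs ! (i - 1) else s i)"

definition ff_e :: "'c set \<Rightarrow> nat \<Rightarrow> (nat \<Rightarrow> 'c) \<Rightarrow> 'c" where
  "ff_e C i = (\<lambda>s. if s \<in> seqs C then s i else undefined)"

definition ff_q :: "'c set \<Rightarrow> nat \<Rightarrow> ((nat \<Rightarrow> 'c) \<Rightarrow> 'c) \<Rightarrow> ((nat \<Rightarrow> 'c) \<Rightarrow> 'c) list \<Rightarrow> (nat \<Rightarrow> 'c) \<Rightarrow> 'c" where
  "ff_q C n \<phi> \<psi>s = (\<lambda>s. if s \<in> seqs C then \<phi> (seq_upd s (map (\<lambda>\<psi>. \<psi> s) \<psi>s)) else undefined)"

definition ff_sg :: "'c set \<Rightarrow> ('s \<Rightarrow> 'c list \<Rightarrow> 'c) \<Rightarrow> 's \<Rightarrow> ((nat \<Rightarrow> 'c) \<Rightarrow> 'c) list \<Rightarrow> (nat \<Rightarrow> 'c) \<Rightarrow> 'c" where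
  "ff_sg C sg \<sigma> \<psi>s = (\<lambda>s. if s \<in> seqs C then sg \<sigma> (map (\<lambda>\<psi>. \<psi> s) \<psi>s) else undefined)"

definition top_ext :: "'c set \<Rightarrow> nat \<Rightarrow> ('c list \<Rightarrow> 'c) \<Rightarrow> (nat \<Rightarrow> 'c) \<Rightarrow> 'c" where
  "top_ext C n f = (\<lambda>s. if s \<in> seqs C then f (map s [1..<n+1]) else undefined)"

text \<open>R(a)^top: the common top extension of the members of R(a).\<close>
definition Rtop :: "'c set \<Rightarrow> (nat \<Rightarrow> 'c \<Rightarrow> 'c list \<Rightarrow> 'c) \<Rightarrow> (nat \<Rightarrow> 'c) \<Rightarrow> 'c \<Rightarrow> (nat \<Rightarrow> 'c) \<Rightarrow> 'c" where
  "Rtop C q e a = (THE t. \<exists>(n, f) \<in> Rset C q e a. t = top_ext C n f)"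

end

theory Submission
  imports Defs
begin

text \<open>If a has dimension at most N, the substitution q_N a is an N-ary representable function
sending (e_1, ..., e_N) to a, every member of R(a) agrees with it on C^N, and by independence from
e_m for m > dim a its top extension does not depend on N.  Hence R(a)^top is the map
s \<mapsto> q_N(a, s_1, ..., s_N) for any large N.  With one N large enough for all elements involved,
the homomorphism equations for e_i, q_n and sigma are (C1), (C4) with (C5), and (C6) read pointwise,
and injectivity follows from (C3) by evaluating at s = (e_1, e_2, ...).\<close>

lemma indep_if_dim_less:
  assumes "finite_dim q e a" and "dim q e a < m"
  shows "indep q e a m"
proof -
  have "m \<notin> deps q e a"
    using assms Max_ge[of "insert 0 (deps q e a)" m] unfolding finite_dim_def dim_def by auto
  with assms(2) show ?thesis
    unfolding deps_def by simp
qed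

lemma seq_upd_in_seqs:
  assumes "s \<in> seqs C" and "set bs \<subseteq> C"
  shows "seq_upd s bs \<in> seqs C"
  using assms nth_mem[of "_ - 1" bs] unfolding seqs_def seq_upd_def by fastforce

lemma map_seq_upd_upt:
  assumes "length bs \<le> M"
  shows "map (seq_upd s bs) [1..<M+1] = bs @ map s [length bs + 1..<M+1]"
  using assms by (intro nth_equalityI) (auto simp: seq_upd_def nth_append simp del: upt_Suc)

lemma member_le_sum_list_map: "y \<in> set ys \<Longrightarrow> (f y :: nat) \<le> sum_list (map f ys)"
  using member_le_sum_list[of "f y" "map f ys"] by simp

lemma obtain_map_preimage:
  assumes "set ys \<subseteq> f ` A"
  obtains xs where "set xs \<subseteq> A" and "ys = map f xs"
proof -
  have "ys \<in> map f ` lists A"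
    using assms unfolding lists_image[symmetric] by blast
  then show ?thesis
    using that by blast
qed

lemma set_map_seqs_subset: "s \<in> seqs C \<Longrightarrow> set (map s [1..<N+1]) \<subseteq> C"
  unfolding seqs_def by auto

locale clone_algebra =
  fixes ar :: "'s \<Rightarrow> nat" and C :: "'c set" and sg :: "'s \<Rightarrow> 'c list \<Rightarrow> 'c"
    and q :: "nat \<Rightarrow> 'c \<Rightarrow> 'c list \<Rightarrow> 'c" and e :: "nat \<Rightarrow> 'c"
  assumes e_in_C: "\<And>i. 1 \<le> i \<Longrightarrow> e i \<in> C"
    and q_in_C: "\<And>n x ys. x \<in> C \<Longrightarrow> length ys = n \<Longrightarrow> set ys \<subseteq> C \<Longrightarrow> q n x ys \<in> C"
    and sg_in_C: "\<And>s xs. length xs = ar s \<Longrightarrow> set xs \<subseteq> C \<Longrightarrow> sg s xs \<in> C"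
    and q_e_proj: "\<And>n i xs. 1 \<le> i \<Longrightarrow> i \<le> n \<Longrightarrow> length xs = n \<Longrightarrow> set xs \<subseteq> C \<Longrightarrow>
      q n (e i) xs = xs ! (i - 1)"
    and q_e_fixed: "\<And>n j xs. n < j \<Longrightarrow> length xs = n \<Longrightarrow> set xs \<subseteq> C \<Longrightarrow> q n (e j) xs = e j"
    and q_unit: "\<And>n x. x \<in> C \<Longrightarrow> q n x (map e [1..<n+1]) = x"
    and q_pad_less: "\<And>n k x ys. k < n \<Longrightarrow> x \<in> C \<Longrightarrow> length ys = k \<Longrightarrow> set ys \<subseteq> C \<Longrightarrow>
      q k x ys = q n x (ys @ map e [k+1..<n+1])"
    and q_assoc: "\<And>n x ys zs. x \<in> C \<Longrightarrow> length ys = n \<Longrightarrow> set ys \<subseteq> C \<Longrightarrow>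
      length zs = n \<Longrightarrow> set zs \<subseteq> C \<Longrightarrow> q n (q n x ys) zs = q n x (map (\<lambda>y. q n y zs) ys)"
    and q_sg: "\<And>s xs n ys. length xs = ar s \<Longrightarrow> set xs \<subseteq> C \<Longrightarrow> length ys = n \<Longrightarrow> set ys \<subseteq> C \<Longrightarrow>
      q n (sg s xs) ys = sg s (map (\<lambda>x. q n x ys) xs)"

lemma clone_algebra_if_clone_alg: "clone_alg ar C sg q e \<Longrightarrow> clone_algebra ar C sg q e"
  unfolding clone_alg_def clone_algebra_def by (elim conjE) (intro conjI; assumption)

context clone_algebra
begin

lemma q_pad:
  assumes "k \<le> n" and "x \<in> C" and "length ys = k" and "set ys \<subseteq> C"
  shows "q k x ys = q n x (ys @ map e [k+1..<n+1])"
  using assms q_pad_less by (cases "k = n") simp_all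

lemma map_q_e_upt:
  assumes "1 \<le> i" and "j \<le> n + 1" and "length ys = n" and "set ys \<subseteq> C"
  shows "map (\<lambda>v. q n v ys) (map e [i..<j]) = map (\<lambda>k. ys ! (k - 1)) [i..<j]"
  unfolding map_map comp_def using assms by (intro map_cong[OF refl] q_e_proj) auto

lemma map_q_e_seq:
  assumes "s \<in> seqs C" and "1 \<le> i" and "j \<le> M + 1"
  shows "map (\<lambda>v. q M v (map s [1..<M+1])) (map e [i..<j]) = map s [i..<j]"
proof -
  have "map (\<lambda>v. q M v (map s [1..<M+1])) (map e [i..<j]) = map (\<lambda>k. map s [1..<M+1] ! (k - 1)) [i..<j]"
    using assms set_map_seqs_subset by (intro map_q_e_upt) simp_all
  also have "\<dots> = map s [i..<j]"
    using assms(2,3) by (intro map_cong) (auto simp del: upt_Suc)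
  finally show ?thesis .
qed

lemma q_indep_last:
  assumes "a \<in> C" and "indep q e a (Suc k)"
    and "length ws = k" and "set ws \<subseteq> C" and "u \<in> C"
  shows "q (Suc k) a (ws @ [u]) = q (Suc k) a (ws @ [e (k + 2)])"
proof -
  let ?ys = "ws @ [u]"
  have ys: "length ?ys = Suc k" "set ?ys \<subseteq> C"
    using assms by auto
  have ws_proj: "map (\<lambda>i. ?ys ! (i - 1)) [1..<Suc k] = ws"
    using assms(3) by (intro nth_equalityI) (auto simp: nth_append simp del: upt_Suc)
  have "q (Suc k) a ?ys = q (Suc k) (q (Suc k) a (map e [1..<Suc k] @ [e (k + 2)])) ?ys"
    using assms(2) unfolding indep_def by simp
  also have "\<dots> = q (Suc k) a (map (\<lambda>v. q (Suc k) v ?ys) (map e [1..<Suc k] @ [e (k + 2)]))"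
    using assms(1) ys e_in_C by (intro q_assoc) auto
  also have "\<dots> = q (Suc k) a (ws @ [e (k + 2)])"
    using ys ws_proj map_q_e_upt[of 1 "Suc k" "Suc k" ?ys] q_e_fixed[of "Suc k" "k + 2" ?ys]
    by simp
  finally show ?thesis .
qed

lemma q_snoc_indep:
  assumes "a \<in> C" and "indep q e a (Suc k)"
    and "length zs = k" and "set zs \<subseteq> C" and "y \<in> C"
  shows "q (Suc k) a (zs @ [y]) = q k a zs"
proof -
  have "q k a zs = q (Suc k) a (zs @ [e (Suc k)])"
    using q_pad[of k "Suc k"] assms by simp
  also have "\<dots> = q (Suc k) a (zs @ [e (k + 2)])"
    using q_indep_last[of a k zs "e (Suc k)"] assms e_in_C by simp
  also have "\<dots> = q (Suc k) a (zs @ [y])"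
    using q_indep_last[of a k zs y] assms by simp
  finally show ?thesis ..
qed

lemma q_take_dim:
  assumes a: "a \<in> C" "finite_dim q e a" "dim q e a \<le> n"
  shows "n \<le> m \<Longrightarrow> length ys = m \<Longrightarrow> set ys \<subseteq> C \<Longrightarrow> q m a ys = q n a (take n ys)"
proof (induction m arbitrary: ys)
  case (Suc k)
  show ?case
  proof (cases "n = Suc k")
    case False
    then have "n \<le> k"
      using Suc.prems by simp
    obtain zs y where ys: "ys = zs @ [y]" and "length zs = k"
      using Suc.prems(2) by (metis length_Suc_conv_rev)
    moreover have "indep q e a (Suc k)"
      using indep_if_dim_less[of q e a "Suc k"] a \<open>n \<le> k\<close> by simp
    ultimately have "q (Suc k) a ys = q k a zs"
      using q_snoc_indep a Suc.prems by simp
    also have "\<dots> = q n a (take n ys)"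
      using Suc.IH \<open>n \<le> k\<close> \<open>length zs = k\<close> Suc.prems ys by simp
    finally show ?thesis .
  qed (use Suc.prems in simp)
qed simp

lemma deps_e_subset:
  assumes "1 \<le> i"
  shows "deps q e (e i) \<subseteq> {i}"
proof
  fix n
  assume "n \<in> deps q e (e i)"
  then have "1 \<le> n" and dep: "\<not> indep q e (e i) n"
    unfolding deps_def by auto
  let ?E = "map e [1..<n] @ [e (n + 1)]"
  have E: "length ?E = n" "set ?E \<subseteq> C"
    using \<open>1 \<le> n\<close> e_in_C by auto
  have "q n (e i) ?E = e i" if "i < n"
  proof -
    have "i - 1 < n - 1"
      using that assms by linarith
    then show ?thesis
      using that assms E q_e_proj[of i n ?E] by (simp add: nth_append)
  qed
  moreover have "q n (e i) ?E = e i" if "n < i"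
    using that E q_e_fixed by simp
  ultimately show "n \<in> {i}"
    using dep unfolding indep_def by (cases "i < n"; cases "n < i") auto
qed

lemma finite_dim_e: "1 \<le> i \<Longrightarrow> finite_dim q e (e i)"
  unfolding finite_dim_def using deps_e_subset finite_subset by blast

lemma dim_e_le: "1 \<le> i \<Longrightarrow> dim q e (e i) \<le> i"
  unfolding dim_def using deps_e_subset finite_dim_e[unfolded finite_dim_def]
  by (subst Max_le_iff) auto

lemma top_ext_q_eq:
  assumes "a \<in> C" "finite_dim q e a" "dim q e a \<le> N" "dim q e a \<le> M"
  shows "top_ext C M (q M a) = top_ext C N (q N a)"
proof -
  have "top_ext C M (q M a) = top_ext C N (q N a)" if "dim q e a \<le> N" "N \<le> M" for N M
  proof
    fix s :: "nat \<Rightarrow> 'c"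
    have "take N (map s [1..<M+1]) = map s [1..<N+1]"
      using that(2) by (simp add: take_map del: upt_Suc)
    then show "top_ext C M (q M a) s = top_ext C N (q N a) s"
      using q_take_dim[OF assms(1,2) that, of "map s [1..<M+1]"] set_map_seqs_subset[of s C M]
      unfolding top_ext_def by simp
  qed
  with assms(3,4) show ?thesis
    by (metis nat_le_linear)
qed

lemma representable_q:
  assumes "a \<in> C" "finite_dim q e a" "dim q e a \<le> n"
  shows "representable C q e n (q n a)"
  using assms unfolding representable_def q_unit[OF assms(1)] by simp

lemma top_ext_Rset:
  assumes "(n, f) \<in> Rset C q e a"
  shows "dim q e a \<le> n" and "top_ext C n f = top_ext C n (q n a)"
proof -
  have rep: "representable C q e n f" and fa: "f (map e [1..<n+1]) = a"
    using assms unfolding Rset_def by auto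
  then show "dim q e a \<le> n"
    unfolding representable_def by auto
  have f: "\<And>as. length as = n \<Longrightarrow> set as \<subseteq> C \<Longrightarrow> f as = q n a as"
    using rep fa unfolding representable_def by auto
  show "top_ext C n f = top_ext C n (q n a)"
  proof
    fix s :: "nat \<Rightarrow> 'c"
    show "top_ext C n f s = top_ext C n (q n a) s"
      using f[of "map s [1..<n+1]"] set_map_seqs_subset[of s C n] unfolding top_ext_def by simp
  qed
qed

theorem Rtop_eq_top_ext:
  assumes "a \<in> C" "finite_dim q e a" "dim q e a \<le> N"
  shows "Rtop C q e a = top_ext C N (q N a)"
  unfolding Rtop_def
proof (rule the_equality)
  let ?d = "dim q e a"
  have "(?d, q ?d a) \<in> Rset C q e a"
    using representable_q[OF assms(1,2) order_refl] q_unit[OF assms(1)] unfolding Rset_def by simp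
  moreover have "top_ext C N (q N a) = top_ext C ?d (q ?d a)"
    using top_ext_q_eq[OF assms(1,2) order_refl assms(3)] .
  ultimately show "\<exists>(n, f)\<in>Rset C q e a. top_ext C N (q N a) = top_ext C n f"
    by blast
next
  fix t
  assume "\<exists>(n, f)\<in>Rset C q e a. t = top_ext C n f"
  then obtain n f where nf: "(n, f) \<in> Rset C q e a" and "t = top_ext C n f"
    by blast
  then have "t = top_ext C n (q n a)"
    using top_ext_Rset(2)[OF nf] by simp
  also have "\<dots> = top_ext C N (q N a)"
    using top_ext_q_eq[OF assms top_ext_Rset(1)[OF nf]] .
  finally show "t = top_ext C N (q N a)" .
qed

lemma Rtop_in_FF:
  assumes "a \<in> C" "finite_dim q e a"
  shows "Rtop C q e a \<in> FF C"
proof -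
  have "q (dim q e a) a (map s [1..<dim q e a + 1]) \<in> C" if "s \<in> seqs C" for s
    by (rule q_in_C[OF assms(1) _ set_map_seqs_subset[OF that]]) simp
  then show ?thesis
    using Rtop_eq_top_ext[OF assms order_refl] unfolding FF_def top_ext_def by simp
qed

lemma Rtop_e:
  assumes "1 \<le> i"
  shows "Rtop C q e (e i) = ff_e C i"
proof
  fix s
  show "Rtop C q e (e i) s = ff_e C i s"
    using assms e_in_C finite_dim_e dim_e_le Rtop_eq_top_ext[of "e i" i]
      q_e_proj[of i i "map s [1..<i+1]"] set_map_seqs_subset[of s C i]
    unfolding top_ext_def ff_e_def by (simp del: upt_Suc)
qed

end

locale finite_dim_clone_algebra = clone_algebra +
  assumes finite_dim: "a \<in> C \<Longrightarrow> finite_dim q e a"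
begin

lemma Rtop_eq:
  assumes "a \<in> C" and "dim q e a \<le> N"
  shows "Rtop C q e a = top_ext C N (q N a)"
  using Rtop_eq_top_ext[OF assms(1) finite_dim[OF assms(1)] assms(2)] .

lemma map_Rtop_apply:
  assumes "set ys \<subseteq> C" and "\<forall>y\<in>set ys. dim q e y \<le> M" and "s \<in> seqs C"
  shows "map (\<lambda>\<psi>. \<psi> s) (map (Rtop C q e) ys) = map (\<lambda>y. q M y (map s [1..<M+1])) ys"
proof -
  have "Rtop C q e y s = q M y (map s [1..<M+1])" if "y \<in> set ys" for y
    using Rtop_eq[of y M] that assms unfolding top_ext_def by auto
  then show ?thesis
    by simp
qed

lemma Rtop_q:
  assumes x: "x \<in> C" and len: "length ys = n" and ys: "set ys \<subseteq> C"
  shows "Rtop C q e (q n x ys) = ff_q C n (Rtop C q e x) (map (Rtop C q e) ys)"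
proof
  fix s
  define M where "M = n + dim q e x + dim q e (q n x ys) + sum_list (map (dim q e) ys)"
  have qC: "q n x ys \<in> C"
    using q_in_C x len ys .
  have dims: "dim q e x \<le> M" "dim q e (q n x ys) \<le> M" "\<forall>y\<in>set ys. dim q e y \<le> M"
    using member_le_sum_list_map[of _ _ "dim q e"] unfolding M_def by fastforce+
  show "Rtop C q e (q n x ys) s = ff_q C n (Rtop C q e x) (map (Rtop C q e) ys) s"
  proof (cases "s \<in> seqs C")
    case False
    then show ?thesis
      using Rtop_eq[OF qC dims(2)] unfolding top_ext_def ff_q_def by simp
  next
    case True
    let ?ss = "map s [1..<M+1]"
    define bs where "bs = map (\<lambda>y. q M y ?ss) ys"
    have ss: "length ?ss = M" "set ?ss \<subseteq> C"
      using set_map_seqs_subset[OF True] by simp_all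
    have bs: "length bs = n" "set bs \<subseteq> C"
      using len ys q_in_C[OF _ ss] unfolding bs_def by auto
    have "n \<le> M"
      unfolding M_def by simp
    have "Rtop C q e (q n x ys) s = q M (q n x ys) ?ss"
      using Rtop_eq[OF qC dims(2)] True unfolding top_ext_def by simp
    also have "\<dots> = q M (q M x (ys @ map e [n+1..<M+1])) ?ss"
      using q_pad[OF \<open>n \<le> M\<close> x len ys] by simp
    also have "\<dots> = q M x (map (\<lambda>v. q M v ?ss) (ys @ map e [n+1..<M+1]))"
      using x len ys ss e_in_C \<open>n \<le> M\<close> by (intro q_assoc) auto
    also have "\<dots> = q M x (bs @ map s [n+1..<M+1])"
      unfolding map_append map_q_e_seq[OF True le_add2 order_refl] bs_def ..
    also have "\<dots> = q M x (map (seq_upd s bs) [1..<M+1])"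
      using map_seq_upd_upt[of bs M s] bs \<open>n \<le> M\<close> by simp
    also have "\<dots> = Rtop C q e x (seq_upd s bs)"
      using Rtop_eq[OF x dims(1)] seq_upd_in_seqs[OF True bs(2)] unfolding top_ext_def by simp
    also have "\<dots> = ff_q C n (Rtop C q e x) (map (Rtop C q e) ys) s"
      unfolding ff_q_def map_Rtop_apply[OF ys dims(3) True] bs_def using True by simp
    finally show ?thesis .
  qed
qed

lemma Rtop_sg:
  assumes len: "length xs = ar \<sigma>" and xs: "set xs \<subseteq> C"
  shows "Rtop C q e (sg \<sigma> xs) = ff_sg C sg \<sigma> (map (Rtop C q e) xs)"
proof
  fix s
  define M where "M = dim q e (sg \<sigma> xs) + sum_list (map (dim q e) xs)"
  have sgC: "sg \<sigma> xs \<in> C"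
    using sg_in_C len xs .
  have dims: "dim q e (sg \<sigma> xs) \<le> M" "\<forall>x\<in>set xs. dim q e x \<le> M"
    using member_le_sum_list_map[of _ _ "dim q e"] unfolding M_def by fastforce+
  show "Rtop C q e (sg \<sigma> xs) s = ff_sg C sg \<sigma> (map (Rtop C q e) xs) s"
  proof (cases "s \<in> seqs C")
    case True
    have ss: "length (map s [1..<M+1]) = M" "set (map s [1..<M+1]) \<subseteq> C"
      using set_map_seqs_subset[OF True] by simp_all
    have "Rtop C q e (sg \<sigma> xs) s = sg \<sigma> (map (\<lambda>x. q M x (map s [1..<M+1])) xs)"
      using Rtop_eq[OF sgC dims(1)] q_sg[OF len xs ss] True unfolding top_ext_def by simp
    then show ?thesis
      unfolding ff_sg_def map_Rtop_apply[OF xs dims(2) True] using True by simp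
  qed (use Rtop_eq[OF sgC dims(1)] in \<open>simp add: top_ext_def ff_sg_def\<close>)
qed

lemma inj_on_Rtop:
  "inj_on (Rtop C q e) C"
proof
  fix a b
  assume a: "a \<in> C" and b: "b \<in> C" and eq: "Rtop C q e a = Rtop C q e b"
  define N where "N = dim q e a + dim q e b"
  define s where "s = (\<lambda>i::nat. if i = 0 then undefined else e i)"
  have s: "s \<in> seqs C" and s_e: "map s [1..<N+1] = map e [1..<N+1]"
    unfolding seqs_def s_def using e_in_C by auto
  have "Rtop C q e x s = x" if "x \<in> C" "dim q e x \<le> N" for x
  proof -
    have "Rtop C q e x s = q N x (map s [1..<N+1])"
      using Rtop_eq[OF that] s unfolding top_ext_def by simp
    then show ?thesis
      unfolding s_e q_unit[OF that(1)] .
  qed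
  with a b eq show "a = b"
    unfolding N_def by (metis le_add1 le_add2)
qed

lemma ff_q_in_Rtop_image:
  assumes "\<phi> \<in> Rtop C q e ` C" and "length \<psi>s = n" and "set \<psi>s \<subseteq> Rtop C q e ` C"
  shows "ff_q C n \<phi> \<psi>s \<in> Rtop C q e ` C"
proof -
  obtain x where x: "x \<in> C" "\<phi> = Rtop C q e x"
    using assms(1) by blast
  obtain ys where ys: "set ys \<subseteq> C" "\<psi>s = map (Rtop C q e) ys"
    using obtain_map_preimage[OF assms(3)] .
  have "ff_q C n \<phi> \<psi>s = Rtop C q e (q n x ys)"
    using Rtop_q x ys assms(2) by simp
  then show ?thesis
    using q_in_C x ys assms(2) by simp
qed

lemma ff_sg_in_Rtop_image:
  assumes "length \<psi>s = ar \<sigma>" and "set \<psi>s \<subseteq> Rtop C q e ` C"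
  shows "ff_sg C sg \<sigma> \<psi>s \<in> Rtop C q e ` C"
proof -
  obtain xs where xs: "set xs \<subseteq> C" "\<psi>s = map (Rtop C q e) xs"
    using obtain_map_preimage[OF assms(2)] .
  have "ff_sg C sg \<sigma> \<psi>s = Rtop C q e (sg \<sigma> xs)"
    using Rtop_sg xs assms(1) by simp
  then show ?thesis
    using sg_in_C xs assms(1) by simp
qed

end

theorem theorem7p6:
  fixes ar :: "'s \<Rightarrow> nat" and C :: "'c set" and sg :: "'s \<Rightarrow> 'c list \<Rightarrow> 'c"
    and q :: "nat \<Rightarrow> 'c \<Rightarrow> 'c list \<Rightarrow> 'c" and e :: "nat \<Rightarrow> 'c"
  assumes "clone_alg ar C sg q e"
    and "\<forall>a\<in>C. finite_dim q e a"
  defines "B \<equiv> Rtop C q e ` C"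
  shows
    \<comment> \<open>B is a subuniverse of the full functional clone tau-algebra with value domain (C, sg)\<close>
    "B \<subseteq> FF C
     \<and> (\<forall>i\<ge>1. ff_e C i \<in> B)
     \<and> (\<forall>n \<phi> \<psi>s. \<phi> \<in> B \<longrightarrow> length \<psi>s = n \<longrightarrow> set \<psi>s \<subseteq> B \<longrightarrow> ff_q C n \<phi> \<psi>s \<in> B)
     \<and> (\<forall>\<sigma> \<psi>s. length \<psi>s = ar \<sigma> \<longrightarrow> set \<psi>s \<subseteq> B \<longrightarrow> ff_sg C sg \<sigma> \<psi>s \<in> B)
     \<comment> \<open>a \<mapsto> R(a)^top is a bijection from C onto B and a homomorphism\<close>
     \<and> bij_betw (Rtop C q e) C B
     \<and> (\<forall>i\<ge>1. Rtop C q e (e i) = ff_e C i)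
     \<and> (\<forall>n x ys. x \<in> C \<longrightarrow> length ys = n \<longrightarrow> set ys \<subseteq> C \<longrightarrow>
          Rtop C q e (q n x ys) = ff_q C n (Rtop C q e x) (map (Rtop C q e) ys))
     \<and> (\<forall>\<sigma> xs. length xs = ar \<sigma> \<longrightarrow> set xs \<subseteq> C \<longrightarrow>
          Rtop C q e (sg \<sigma> xs) = ff_sg C sg \<sigma> (map (Rtop C q e) xs))"
proof -
  interpret clone_algebra ar C sg q e
    using assms(1) by (rule clone_algebra_if_clone_alg)
  interpret finite_dim_clone_algebra ar C sg q e
    using assms(2) by unfold_locales blast
  show ?thesis
    unfolding B_def
  proof (intro conjI allI impI)
    show "Rtop C q e ` C \<subseteq> FF C"
      using Rtop_in_FF assms(2) by blast
    show "ff_e C i \<in> Rtop C q e ` C" if "1 \<le> i" for i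
      using Rtop_e[OF that] e_in_C[OF that] by (metis image_eqI)
    show "bij_betw (Rtop C q e) C (Rtop C q e ` C)"
      unfolding bij_betw_def using inj_on_Rtop by blast
  qed (use ff_q_in_Rtop_image ff_sg_in_Rtop_image Rtop_e Rtop_q Rtop_sg in auto)
qed

end
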